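(* Let $\mathcal{G}=(G,<,+,0,\ldots)$ be an o-minimal expansion of an ordered abelian group, let $M\subseteq G^m$ be a definable set that is not bounded and let $N\subseteq G^n$ be a bounded definable set. If there is a definable bijection between $M$ and $N$, then there exist a bounded definable set $D\subseteq G$ and a definable bijection $(0,+\infty)\to D$.
   Context: A definable set $M\subseteq G^n$ is bounded if $M\subseteq[b,b']^n$ for some $b,b'\in G$, where $[b,b']=\{t\in G\mid b\le t\le b'\}$; here $(0,+\infty)=\{t\in G\mid t>0\}$. *)

theory Defs
  imports Main
begin

text \<open>Points of G^n are lists of length n.  A first-order structure on G (with parameters)
is given, following van den Dries, by the collections S n of definable subsets of G^n.\<close>

definition cube :: "nat \<Rightarrow> 'a list set" where
  "cube n = {xs. length xs = n}"

definition is_open_interval :: "('a::linorder) set \<Rightarrow> bool" where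
  "is_open_interval I \<longleftrightarrow>
     (\<exists>a b. I = {a<..<b}) \<or> (\<exists>b. I = {..<b}) \<or> (\<exists>a. I = {a<..}) \<or> I = UNIV"

definition structure_on :: "(nat \<Rightarrow> 'a list set set) \<Rightarrow> bool" where
  "structure_on S \<longleftrightarrow>
     (\<forall>n. \<forall>A\<in>S n. A \<subseteq> cube n) \<and>
     (\<forall>n. {} \<in> S n) \<and>
     (\<forall>n. \<forall>A\<in>S n. \<forall>B\<in>S n. A \<union> B \<in> S n) \<and>
     (\<forall>n. \<forall>A\<in>S n. cube n - A \<in> S n) \<and>
     (\<forall>n. \<forall>A\<in>S n. {xs @ [x] | xs x. xs \<in> A} \<in> S (Suc n)) \<and>
     (\<forall>n. \<forall>A\<in>S n. {x # xs | x xs. xs \<in> A} \<in> S (Suc n)) \<and>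
     (\<forall>n i j. i < n \<longrightarrow> j < n \<longrightarrow> {xs \<in> cube n. xs ! i = xs ! j} \<in> S n) \<and>
     (\<forall>n. \<forall>A\<in>S (Suc n). butlast ` A \<in> S n) \<and>
     (\<forall>a. {[a]} \<in> S 1)"

definition o_minimal_expansion :: "(nat \<Rightarrow> ('a::linordered_ab_group_add) list set set) \<Rightarrow> bool" where
  "o_minimal_expansion S \<longleftrightarrow>
     structure_on S \<and>
     {[x, y] | x y. x < y} \<in> S 2 \<and>
     {[x, y, z] | x y z. x + y = z} \<in> S 3 \<and>
     (\<forall>A\<in>S 1. \<exists>P F. finite P \<and> finite F \<and> (\<forall>I\<in>F. is_open_interval I) \<and>
                      {x. [x] \<in> A} = P \<union> \<Union>F)"

definition definable :: "(nat \<Rightarrow> 'a list set set) \<Rightarrow> nat \<Rightarrow> 'a list set \<Rightarrow> bool" where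
  "definable S n A \<longleftrightarrow> A \<in> S n"

definition definable_map ::
  "(nat \<Rightarrow> 'a list set set) \<Rightarrow> nat \<Rightarrow> nat \<Rightarrow> 'a list set \<Rightarrow> ('a list \<Rightarrow> 'a list) \<Rightarrow> bool" where
  "definable_map S m n M f \<longleftrightarrow>
     M \<subseteq> cube m \<and> f ` M \<subseteq> cube n \<and> {xs @ f xs | xs. xs \<in> M} \<in> S (m + n)"

definition bounded_set :: "('a::linorder) list set \<Rightarrow> bool" where
  "bounded_set M \<longleftrightarrow> (\<exists>b b'. \<forall>xs\<in>M. \<forall>t\<in>set xs. b \<le> t \<and> t \<le> b')"

end

(*
  Some coordinate x_i of M is unbounded, say above (otherwise use -x_i).  The definable relation
  R = {(x_i, h x) | x \<in> M} \<subseteq> G \<times> G^n is then a multivalued map defined on a tail (e, +\<infinity>) of G,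
  with values in the bounded set N, and injective in the sense that different arguments have
  disjoint sets of values (because h is injective).  Induction on n reduces such relations to the
  case n = 1, looking at the last coordinate s of the values: either one value of s occurs over a
  whole tail, and fixing it lowers n; or every set T_s = {t | (t, ..., s) \<in> R} is bounded above, and
  the relation u = sup T_s, read as a multivalued map u \<mapsto> s, is of the same kind with n = 1.
  For n = 1, t \<mapsto> sup {s | (t, s) \<in> R} is a definable function on a tail with bounded values.  By
  o-minimality the supremum is either attained on a whole tail, where injectivity is inherited from
  R, or nowhere on a tail; then every fibre contains an interval just below its supremum, so two
  fibres with the same supremum meet, and again injectivity follows.  A translation moves the tail
  to (0, +\<infinity>).

  The only consequence of o-minimality used is that every definable subset of G is constant on the
  intervals between finitely many points; it also makes G dense, so that bounded nonempty definable
  subsets of G have suprema.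
*)

theory Submission
  imports Defs
begin

locale first_order_structure =
  fixes S :: "nat \<Rightarrow> 'a list set set"
  assumes structure_on: "structure_on S"
begin

lemma subset_cube: "A \<in> S n \<Longrightarrow> A \<subseteq> cube n"
  using structure_on by (simp add: structure_on_def)

lemma length_mem: "A \<in> S n \<Longrightarrow> xs \<in> A \<Longrightarrow> length xs = n"
  using subset_cube by (auto simp: cube_def)

lemma Un_in: "A \<in> S n \<Longrightarrow> B \<in> S n \<Longrightarrow> A \<union> B \<in> S n"
  using structure_on by (simp add: structure_on_def)

lemma cube_Diff_in: "A \<in> S n \<Longrightarrow> cube n - A \<in> S n"
  using structure_on by (simp add: structure_on_def)

lemma Cons_in: "A \<in> S n \<Longrightarrow> {x # xs | x xs. xs \<in> A} \<in> S (Suc n)"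
  using structure_on by (simp add: structure_on_def)

lemma diagonal_in: "i < n \<Longrightarrow> j < n \<Longrightarrow> {xs \<in> cube n. xs ! i = xs ! j} \<in> S n"
  using structure_on by (simp add: structure_on_def)

lemma butlast_in: "A \<in> S (Suc n) \<Longrightarrow> butlast ` A \<in> S n"
  using structure_on by (simp add: structure_on_def)

lemma singleton_in: "{[a]} \<in> S 1"
  using structure_on by (simp add: structure_on_def)

lemma Int_in:
  assumes "A \<in> S n" "B \<in> S n"
  shows "A \<inter> B \<in> S n"
proof -
  have "A \<inter> B = cube n - ((cube n - A) \<union> (cube n - B))"
    using assms[THEN subset_cube] by blast
  then show ?thesis
    using assms by (simp add: Un_in cube_Diff_in)
qed

lemma cylinder_in: "A \<in> S k \<Longrightarrow> {ys @ zs | ys zs. length ys = l \<and> zs \<in> A} \<in> S (l + k)"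
proof (induction l)
  case (Suc l)
  have "{ys @ zs | ys zs. length ys = Suc l \<and> zs \<in> A}
      = {x # xs | x xs. xs \<in> {ys @ zs | ys zs. length ys = l \<and> zs \<in> A}}"
    by (auto simp: length_Suc_conv) (metis append_Cons)+
  then show ?case
    using Cons_in[OF Suc.IH[OF Suc.prems]] by simp
qed simp

lemma take_in: "A \<in> S (l + k) \<Longrightarrow> take l ` A \<in> S l"
proof (induction k arbitrary: A)
  case 0
  then have "take l ` A = A"
    by (force simp: length_mem)
  with 0 show ?case by simp
next
  case (Suc k)
  have "take l ` A = take l ` butlast ` A"
    by (force simp: image_image butlast_conv_take length_mem[OF Suc.prems])
  then show ?case
    using Suc.IH butlast_in Suc.prems by simp
qed

lemma diagonals_in:
  assumes "A \<in> S n" "finite P" "\<forall>i j. (i, j) \<in> P \<longrightarrow> i < n \<and> j < n"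
  shows "{xs \<in> A. \<forall>i j. (i, j) \<in> P \<longrightarrow> xs ! i = xs ! j} \<in> S n"
  using assms(2,3)
proof (induction P rule: finite_induct)
  case empty
  then show ?case using assms(1) by simp
next
  case (insert p P)
  obtain i j where p: "p = (i, j)" by fastforce
  have "{xs \<in> A. \<forall>i j. (i, j) \<in> insert p P \<longrightarrow> xs ! i = xs ! j}
      = {xs \<in> A. \<forall>i j. (i, j) \<in> P \<longrightarrow> xs ! i = xs ! j} \<inter> {xs \<in> cube n. xs ! i = xs ! j}"
    using subset_cube[OF assms(1)] p by auto
  then show ?case
    using insert p by (simp add: Int_in diagonal_in)
qed

lemma matching_in:
  assumes A: "A \<in> S k" and P: "finite P" "\<forall>i j. (i, j) \<in> P \<longrightarrow> i < l \<and> j < k"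
  shows "{ys \<in> cube l. \<exists>zs\<in>A. \<forall>i j. (i, j) \<in> P \<longrightarrow> ys ! i = zs ! j} \<in> S l"
proof -
  let ?C = "{ys @ zs | ys zs. length ys = l \<and> zs \<in> A}"
  let ?Q = "{(i, l + j) | i j. (i, j) \<in> P}"
  let ?D = "{ws \<in> ?C. \<forall>i j. (i, j) \<in> ?Q \<longrightarrow> ws ! i = ws ! j}"
  have "?Q = (\<lambda>(i, j). (i, l + j)) ` P"
    by force
  then have "?D \<in> S (l + k)"
    using P by (intro diagonals_in cylinder_in A) fastforce+
  then have "take l ` ?D \<in> S l"
    by (rule take_in)
  moreover have "take l ` ?D = {ys \<in> cube l. \<exists>zs\<in>A. \<forall>i j. (i, j) \<in> P \<longrightarrow> ys ! i = zs ! j}"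
  proof (intro equalityI subsetI)
    fix ys assume "ys \<in> {ys \<in> cube l. \<exists>zs\<in>A. \<forall>i j. (i, j) \<in> P \<longrightarrow> ys ! i = zs ! j}"
    then obtain zs where "length ys = l" "zs \<in> A" "\<forall>i j. (i, j) \<in> P \<longrightarrow> ys ! i = zs ! j"
      by (auto simp: cube_def)
    then show "ys \<in> take l ` ?D"
      using P by (intro image_eqI[of _ _ "ys @ zs"]) (auto simp: nth_append)
  qed (use P in \<open>fastforce simp: cube_def nth_append\<close>)
  ultimately show ?thesis
    by simp
qed

lemma preimage_in:
  assumes A: "A \<in> S (length ix)" and ix: "set ix \<subseteq> {..<n}"
  shows "{xs \<in> cube n. map ((!) xs) ix \<in> A} \<in> S n"
proof -
  let ?P = "{(ix ! j, j) | j. j < length ix}"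
  have "(\<forall>i j. (i, j) \<in> ?P \<longrightarrow> xs ! i = zs ! j) \<longleftrightarrow> zs = map ((!) xs) ix" if "zs \<in> A" for xs zs
    using length_mem[OF A that] by (auto simp: list_eq_iff_nth_eq)
  then have "{xs \<in> cube n. map ((!) xs) ix \<in> A}
      = {xs \<in> cube n. \<exists>zs\<in>A. \<forall>i j. (i, j) \<in> ?P \<longrightarrow> xs ! i = zs ! j}"
    by auto
  also have "\<dots> \<in> S n"
    using A ix by (intro matching_in) (use nth_mem in fastforce)+
  finally show ?thesis .
qed

lemma image_in:
  assumes A: "A \<in> S k" and ix: "set ix \<subseteq> {..<k}"
  shows "(\<lambda>zs. map ((!) zs) ix) ` A \<in> S (length ix)"
proof -
  let ?P = "{(j, ix ! j) | j. j < length ix}"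
  have "(\<lambda>zs. map ((!) zs) ix) ` A
      = {ys \<in> cube (length ix). \<exists>zs\<in>A. \<forall>i j. (i, j) \<in> ?P \<longrightarrow> ys ! i = zs ! j}"
    by (auto simp: cube_def list_eq_iff_nth_eq)
  also have "\<dots> \<in> S (length ix)"
    using A ix by (intro matching_in) (use nth_mem in fastforce)+
  finally show ?thesis .
qed

end

(* First-order formulas whose atoms are arbitrary sets: FAtom A ix holds at a point xs if the
   coordinates of xs listed in ix form a point of A; FEx quantifies over a new variable appended
   as the last coordinate. *)

datatype 'a fm = FAtom "'a list set" "nat list" | FNeg "'a fm" | FConj "'a fm" "'a fm" | FEx "'a fm"

fun sat :: "'a fm \<Rightarrow> 'a list \<Rightarrow> bool" where
  "sat (FAtom A ix) xs \<longleftrightarrow> map ((!) xs) ix \<in> A"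
| "sat (FNeg p) xs \<longleftrightarrow> \<not> sat p xs"
| "sat (FConj p q) xs \<longleftrightarrow> sat p xs \<and> sat q xs"
| "sat (FEx p) xs \<longleftrightarrow> (\<exists>x. sat p (xs @ [x]))"

fun wf_fm :: "(nat \<Rightarrow> 'a list set set) \<Rightarrow> nat \<Rightarrow> 'a fm \<Rightarrow> bool" where
  "wf_fm S n (FAtom A ix) \<longleftrightarrow> A \<in> S (length ix) \<and> set ix \<subseteq> {..<n}"
| "wf_fm S n (FNeg p) \<longleftrightarrow> wf_fm S n p"
| "wf_fm S n (FConj p q) \<longleftrightarrow> wf_fm S n p \<and> wf_fm S n q"
| "wf_fm S n (FEx p) \<longleftrightarrow> wf_fm S (Suc n) p"

definition FImp :: "'a fm \<Rightarrow> 'a fm \<Rightarrow> 'a fm" where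
  "FImp p q = FNeg (FConj p (FNeg q))"

definition FAll :: "'a fm \<Rightarrow> 'a fm" where
  "FAll p = FNeg (FEx (FNeg p))"

definition FLess :: "nat \<Rightarrow> nat \<Rightarrow> 'a::ord fm" where
  "FLess i j = FAtom {[x, y] | x y. x < y} [i, j]"

definition FPlus :: "nat \<Rightarrow> nat \<Rightarrow> nat \<Rightarrow> 'a::plus fm" where
  "FPlus i j k = FAtom {[x, y, z] | x y z. x + y = z} [i, j, k]"

definition FConst :: "'a \<Rightarrow> nat \<Rightarrow> 'a fm" where
  "FConst a i = FAtom {[a]} [i]"

lemma sat_FImp [simp]: "sat (FImp p q) xs \<longleftrightarrow> (sat p xs \<longrightarrow> sat q xs)"
  by (simp add: FImp_def)

lemma sat_FAll [simp]: "sat (FAll p) xs \<longleftrightarrow> (\<forall>x. sat p (xs @ [x]))"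
  by (simp add: FAll_def)

lemma wf_fm_FImp [simp]: "wf_fm S n (FImp p q) \<longleftrightarrow> wf_fm S n p \<and> wf_fm S n q"
  by (simp add: FImp_def)

lemma wf_fm_FAll [simp]: "wf_fm S n (FAll p) \<longleftrightarrow> wf_fm S (Suc n) p"
  by (simp add: FAll_def)

lemma sat_FLess [simp]: "sat (FLess i j) xs \<longleftrightarrow> xs ! i < xs ! j"
  by (simp add: FLess_def)

lemma sat_FPlus [simp]: "sat (FPlus i j k) xs \<longleftrightarrow> xs ! i + xs ! j = xs ! k"
  by (auto simp: FPlus_def)

lemma sat_FConst [simp]: "sat (FConst a i) xs \<longleftrightarrow> xs ! i = a"
  by (simp add: FConst_def)

context first_order_structure
begin

lemma fm_set_in: "wf_fm S n p \<Longrightarrow> {xs. length xs = n \<and> sat p xs} \<in> S n"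
proof (induction p arbitrary: n)
  case (FAtom A ix)
  then show ?case
    using preimage_in[of A ix n] by (simp add: cube_def)
next
  case (FNeg p)
  have "{xs. length xs = n \<and> sat (FNeg p) xs} = cube n - {xs. length xs = n \<and> sat p xs}"
    by (auto simp: cube_def)
  then show ?case
    using FNeg by (simp add: cube_Diff_in)
next
  case (FConj p q)
  have "{xs. length xs = n \<and> sat (FConj p q) xs}
      = {xs. length xs = n \<and> sat p xs} \<inter> {xs. length xs = n \<and> sat q xs}"
    by auto
  then show ?case
    using FConj by (simp add: Int_in)
next
  case (FEx p)
  have "{xs. length xs = n \<and> sat (FEx p) xs} = butlast ` {xs. length xs = Suc n \<and> sat p xs}"
  proof (intro equalityI subsetI)
    fix xs assume "xs \<in> {xs. length xs = n \<and> sat (FEx p) xs}"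
    then obtain x where "length xs = n" "sat p (xs @ [x])"
      by auto
    then show "xs \<in> butlast ` {xs. length xs = Suc n \<and> sat p xs}"
      by (intro image_eqI[of _ _ "xs @ [x]"]) auto
  next
    fix xs assume "xs \<in> butlast ` {xs. length xs = Suc n \<and> sat p xs}"
    then obtain ys where "xs = butlast ys" "length ys = Suc n" "sat p ys"
      by auto
    then show "xs \<in> {xs. length xs = n \<and> sat (FEx p) xs}"
      by (cases ys rule: rev_cases) auto
  qed
  then show ?case
    using FEx by (simp add: butlast_in)
qed

lemma domain_in:
  assumes R: "R \<in> S (Suc n)"
  shows "{[t] | t. \<exists>y. t # y \<in> R} \<in> S 1"
proof -
  have "{[t] | t. \<exists>y. t # y \<in> R} = (\<lambda>zs. map ((!) zs) [0]) ` R"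
    using length_mem[OF R] by (force simp: length_Suc_conv)
  then show ?thesis
    using image_in[OF R, of "[0]"] by simp
qed

lemma converse_in:
  assumes R: "R \<in> S 2"
  shows "{[y, x] | x y. [x, y] \<in> R} \<in> S 2"
proof -
  have "{[y, x] | x y. [x, y] \<in> R} = (\<lambda>zs. map ((!) zs) [1, 0]) ` R"
    using length_mem[OF R] by (force simp: numeral_2_eq_2 length_Suc_conv)
  then show ?thesis
    using image_in[OF R, of "[1, 0]"] by (simp add: numeral_2_eq_2)
qed

lemma Cons_fiber_in:
  assumes R: "R \<in> S (Suc n)"
  shows "{y. t # y \<in> R} \<in> S n"
proof -
  let ?T = "{zs \<in> cube (Suc n). map ((!) zs) [0] \<in> {[t]}}"
  have "map ((!) (t # y)) [1..<Suc n] = y" if "length y = n" for y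
    using that by (intro nth_equalityI) (simp_all del: upt_Suc add: nth_map_upt)
  then have "{y. t # y \<in> R} = (\<lambda>zs. map ((!) zs) [1..<Suc n]) ` (R \<inter> ?T)"
    using length_mem[OF R] by (force simp: cube_def length_Suc_conv)
  moreover have "R \<inter> ?T \<in> S (Suc n)"
    by (intro Int_in R preimage_in) (auto simp: singleton_in[unfolded One_nat_def])
  then have "(\<lambda>zs. map ((!) zs) [1..<Suc n]) ` (R \<inter> ?T) \<in> S (length [1..<Suc n])"
    by (rule image_in) auto
  ultimately show ?thesis
    by (simp del: upt_Suc)
qed

lemma snoc_fiber_in:
  assumes R: "R \<in> S (Suc n)"
  shows "{y. y @ [s] \<in> R} \<in> S n"
proof -
  let ?T = "{zs \<in> cube (Suc n). map ((!) zs) [n] \<in> {[s]}}"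
  have "{y. y @ [s] \<in> R} = butlast ` (R \<inter> ?T)"
  proof (intro equalityI subsetI)
    fix y assume y: "y \<in> {y. y @ [s] \<in> R}"
    then have "length y = n"
      using length_mem[OF R] by fastforce
    with y show "y \<in> butlast ` (R \<inter> ?T)"
      by (intro image_eqI[of _ _ "y @ [s]"]) (auto simp: cube_def)
  next
    fix y assume "y \<in> butlast ` (R \<inter> ?T)"
    then obtain zs where "y = butlast zs" "zs \<in> R" "length zs = Suc n" "zs ! n = s"
      by (auto simp: cube_def)
    then show "y \<in> {y. y @ [s] \<in> R}"
      by (cases zs rule: rev_cases) (auto simp: nth_append)
  qed
  moreover have "R \<inter> ?T \<in> S (Suc n)"
    by (intro Int_in R preimage_in) (auto simp: singleton_in[unfolded One_nat_def])
  ultimately show ?thesis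
    by (simp add: butlast_in)
qed

lemma first_last_projection_in:
  assumes R: "R \<in> S (Suc (Suc n))"
  shows "{[t, s] | t s. \<exists>y. t # y @ [s] \<in> R} \<in> S 2"
proof -
  have "{[t, s] | t s. \<exists>y. t # y @ [s] \<in> R} = (\<lambda>zs. map ((!) zs) [0, Suc n]) ` R"
  proof (intro equalityI subsetI)
    fix xs assume "xs \<in> {[t, s] | t s. \<exists>y. t # y @ [s] \<in> R}"
    then obtain t s y where "xs = [t, s]" "t # y @ [s] \<in> R"
      by blast
    moreover from this have "length y = n"
      using length_mem[OF R] by fastforce
    ultimately show "xs \<in> (\<lambda>zs. map ((!) zs) [0, Suc n]) ` R"
      by (intro image_eqI[of _ _ "t # y @ [s]"]) (auto simp: nth_append)
  next
    fix xs assume "xs \<in> (\<lambda>zs. map ((!) zs) [0, Suc n]) ` R"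
    then obtain zs where "xs = [zs ! 0, zs ! Suc n]" "zs \<in> R"
      by auto
    moreover obtain t y s where "zs = t # y @ [s]" "length y = n"
      using length_mem[OF R \<open>zs \<in> R\<close>] by (metis length_Suc_conv length_Suc_conv_rev)
    ultimately show "xs \<in> {[t, s] | t s. \<exists>y. t # y @ [s] \<in> R}"
      by (auto simp: nth_append)
  qed
  then show ?thesis
    using image_in[OF R, of "[0, Suc n]"] by (simp add: numeral_2_eq_2)
qed

lemma diagonal_graph_in: "{[v, v] | v. True} \<in> S 2"
proof -
  have "{[v, v] | v :: 'a. True} = {xs \<in> cube 2. xs ! 0 = xs ! 1}"
    by (auto simp: cube_def numeral_2_eq_2 length_Suc_conv)
  then show ?thesis
    using diagonal_in[of 0 2 1] by simp
qed

lemma definable_bij_of_graph: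
  assumes graph: "{[x, \<phi> x] | x. P x} \<in> S 2" and inj: "inj_on \<phi> {x. P x}"
  shows "{[\<phi> x] | x. P x} \<in> S 1"
    and "definable_map S 1 1 {[x] | x. P x} (\<lambda>xs. [\<phi> (hd xs)])"
    and "bij_betw (\<lambda>xs. [\<phi> (hd xs)]) {[x] | x. P x} {[\<phi> x] | x. P x}"
proof -
  have "{[\<phi> x] | x. P x} = (\<lambda>zs. map ((!) zs) [1]) ` {[x, \<phi> x] | x. P x}"
    by force
  then show "{[\<phi> x] | x. P x} \<in> S 1"
    using image_in[OF graph, of "[1]"] by simp
  have "{xs @ [\<phi> (hd xs)] | xs. xs \<in> {[x] | x. P x}} = {[x, \<phi> x] | x. P x}"
    by auto
  with graph show "definable_map S 1 1 {[x] | x. P x} (\<lambda>xs. [\<phi> (hd xs)])"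
    unfolding definable_map_def by (auto simp: cube_def numeral_2_eq_2)
  have "inj_on (\<lambda>xs. [\<phi> (hd xs)]) {[x] | x. P x}"
    using inj by (auto simp: inj_on_def)
  moreover have "(\<lambda>xs. [\<phi> (hd xs)]) ` {[x] | x. P x} = {[\<phi> x] | x. P x}"
    by force
  ultimately show "bij_betw (\<lambda>xs. [\<phi> (hd xs)]) {[x] | x. P x} {[\<phi> x] | x. P x}"
    unfolding bij_betw_def ..
qed

end

definition boundary_within :: "'a::linorder set \<Rightarrow> 'a set \<Rightarrow> bool" where
  "boundary_within E X \<longleftrightarrow> (\<forall>x y. x \<le> y \<longrightarrow> {x..y} \<inter> E = {} \<longrightarrow> (x \<in> X \<longleftrightarrow> y \<in> X))"

definition is_sup :: "'a::linorder set \<Rightarrow> 'a \<Rightarrow> bool" where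
  "is_sup X s \<longleftrightarrow> (\<forall>x\<in>X. x \<le> s) \<and> (\<forall>s' < s. \<exists>x\<in>X. s' < x)"

lemma is_sup_unique: "is_sup X s \<Longrightarrow> is_sup X s' \<Longrightarrow> s = s'"
  unfolding is_sup_def by (metis not_le order.asym linorder_neqE)

lemma is_sup_between:
  assumes "is_sup X s" "x0 \<in> X" "\<forall>x\<in>X. b \<le> x \<and> x \<le> b'"
  shows "b \<le> s \<and> s \<le> b'"
  using assms unfolding is_sup_def by (metis not_le order_trans)

lemma boundary_withinD:
  assumes "boundary_within E X" "{min x y..max x y} \<inter> E = {}"
  shows "x \<in> X \<longleftrightarrow> y \<in> X"
  using assms unfolding boundary_within_def
  by (cases "x \<le> y") (simp_all add: min_def max_def, meson linorder_le_cases)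

lemma boundary_within_Un:
  "boundary_within E X \<Longrightarrow> boundary_within F Y \<Longrightarrow> boundary_within (E \<union> F) (X \<union> Y)"
  unfolding boundary_within_def by blast

lemma boundary_within_self: "boundary_within E E"
  unfolding boundary_within_def by auto

lemma boundary_within_open_interval:
  assumes "is_open_interval I"
  shows "\<exists>E. finite E \<and> boundary_within E I"
proof -
  have below: "a < x \<longleftrightarrow> a < y" and above: "x < a \<longleftrightarrow> y < a"
    if "x \<le> y" "{x..y} \<inter> E = {}" "a \<in> E" for x y a :: 'a and E
  proof -
    have "\<not> (x \<le> a \<and> a \<le> y)"
      using that by auto
    then show "a < x \<longleftrightarrow> a < y" "x < a \<longleftrightarrow> y < a"
      using \<open>x \<le> y\<close> by auto
  qed
  from assms show ?thesis
    unfolding is_open_interval_def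
  proof (elim disjE exE)
    fix a b assume "I = {a<..<b}"
    then show ?thesis
      using below[of _ _ "{a, b}" a] above[of _ _ "{a, b}" b]
      by (intro exI[of _ "{a, b}"]) (auto simp: boundary_within_def)
  next
    fix b assume "I = {..<b}"
    then show ?thesis
      using above[of _ _ "{b}" b]
      by (intro exI[of _ "{b}"]) (auto simp: boundary_within_def)
  next
    fix a assume "I = {a<..}"
    then show ?thesis
      using below[of _ _ "{a}" a]
      by (intro exI[of _ "{a}"]) (auto simp: boundary_within_def)
  qed (auto simp: boundary_within_def)
qed

lemma boundary_within_Union:
  assumes "finite F" "\<forall>I\<in>F. \<exists>E. finite E \<and> boundary_within E I"
  shows "\<exists>E. finite E \<and> boundary_within E (\<Union>F)"
  using assms
proof (induction F rule: finite_induct)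
  case empty
  then show ?case by (auto simp: boundary_within_def)
next
  case (insert I F)
  then obtain E1 E2 where "finite E1" "boundary_within E1 I" "finite E2" "boundary_within E2 (\<Union>F)"
    by auto
  then show ?case
    by (intro exI[of _ "E1 \<union> E2"]) (simp add: boundary_within_Un)
qed

lemma boundary_within_eventually:
  assumes "finite E" "boundary_within E X"
  shows "\<exists>e. (\<forall>x>e. x \<in> X) \<or> (\<forall>x>e. x \<notin> X)"
proof -
  obtain e where e: "\<forall>x\<in>E. x \<le> e"
    using assms(1) by (metis Max_ge finite_insert insertCI)
  have "x \<in> X \<longleftrightarrow> y \<in> X" if "e < x" "x \<le> y" for x y
    using assms(2) e that unfolding boundary_within_def by fastforce
  then have "x \<in> X \<longleftrightarrow> y \<in> X" if "e < x" "e < y" for x y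
    using that by (metis linorder_le_cases)
  then show ?thesis
    by blast
qed

lemma boundary_within_has_sup:
  fixes X :: "'a::linorder set"
  assumes exists_between: "\<And>x y :: 'a. x < y \<Longrightarrow> \<exists>z. x < z \<and> z < y"
    and no_top: "\<And>x :: 'a. \<exists>y. x < y"
    and fin: "finite E" and bd: "boundary_within E X" and x0: "x0 \<in> X" and ub: "\<forall>x\<in>X. x \<le> B"
  shows "\<exists>s. is_sup X s"
proof -
  define q where "q = Max {e \<in> insert x0 E. \<exists>x\<in>X. e \<le> x}"
  have "q \<in> {e \<in> insert x0 E. \<exists>x\<in>X. e \<le> x}"
    unfolding q_def using fin x0 by (intro Max_in) auto
  then have q: "\<exists>x\<in>X. q \<le> x"
    by blast
  have E_above: "x < e" if "e \<in> E" "q < e" "x \<in> X" for e x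
  proof (rule ccontr)
    assume "\<not> x < e"
    then have "e \<le> q"
      unfolding q_def using fin that by (intro Max_ge) (auto simp: not_less)
    with \<open>q < e\<close> show False
      by simp
  qed
  show ?thesis
  proof (cases "\<exists>x1\<in>X. q < x1")
    case False
    with q have "is_sup X q"
      unfolding is_sup_def by (metis not_le order_antisym)
    then show ?thesis ..
  next
    case True
    then obtain x1 where x1: "x1 \<in> X" "q < x1" by blast
    have gap: "y \<in> X" if "x1 \<le> y" "\<forall>e\<in>E. q < e \<longrightarrow> y < e" for y
    proof -
      have "{x1..y} \<inter> E = {}"
        using that x1(2) by fastforce
      then show ?thesis
        using bd x1(1) that(1) unfolding boundary_within_def by blast
    qed
    let ?U = "{e \<in> E. q < e}"
    have "?U \<noteq> {}"
    proof
      assume "?U = {}"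
      obtain y where y: "max B x1 < y"
        using no_top[of "max B x1"] by blast
      with \<open>?U = {}\<close> have "y \<in> X"
        by (intro gap) auto
      with y ub show False
        by (meson max.strict_boundedE not_le)
    qed
    define e1 where "e1 = Min ?U"
    have e1: "e1 \<in> E" "q < e1" "\<forall>e\<in>E. q < e \<longrightarrow> e1 \<le> e"
      using Min_in[of ?U] fin \<open>?U \<noteq> {}\<close> unfolding e1_def by auto
    have "is_sup X e1"
      unfolding is_sup_def
    proof (intro conjI allI impI ballI)
      show "x \<le> e1" if "x \<in> X" for x
        using E_above[OF e1(1,2) that] by simp
      fix s' assume "s' < e1"
      moreover have "x1 < e1"
        using E_above[OF e1(1,2) x1(1)] .
      ultimately obtain c where "max s' x1 < c" "c < e1"
        using exists_between[of "max s' x1" e1] by auto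
      with gap[of c] e1 show "\<exists>x\<in>X. s' < x"
        by force
    qed
    then show ?thesis ..
  qed
qed

lemma boundary_within_common_sup:
  assumes fin: "finite E" and bd: "boundary_within E X"
    and sup: "is_sup X a" "is_sup Y a" and notin: "a \<notin> X" "a \<notin> Y" and y0: "y0 \<in> Y"
  shows "X \<inter> Y \<noteq> {}"
proof -
  define c where "c = Max (insert y0 {e \<in> E. e < a})"
  have "y0 < a"
    using sup(2) y0 notin(2) unfolding is_sup_def by (metis order_le_imp_less_or_eq)
  then have c: "c < a" "\<forall>e\<in>E. e < a \<longrightarrow> e \<le> c"
    using fin unfolding c_def by auto
  obtain x where x: "x \<in> X" "c < x" "x < a"
    using sup(1) notin(1) c(1) unfolding is_sup_def by (metis order_le_imp_less_or_eq)
  obtain y where y: "y \<in> Y" "c < y" "y < a"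
    using sup(2) notin(2) c(1) unfolding is_sup_def by (metis order_le_imp_less_or_eq)
  have "e \<notin> E" if "min x y \<le> e" "e \<le> max x y" for e
  proof
    assume "e \<in> E"
    moreover have "e < a"
      using that x y by (metis le_max_iff_disj order.strict_trans1)
    ultimately have "e \<le> c"
      using c by blast
    then show False
      using that x y by (metis min_le_iff_disj not_le order.strict_trans1)
  qed
  then have "{min x y..max x y} \<inter> E = {}"
    by auto
  then have "y \<in> X"
    using boundary_withinD[OF bd] x by blast
  with y show ?thesis
    by blast
qed

lemma unbounded_coordinate:
  fixes M :: "'a::linorder list set"
  assumes M: "M \<subseteq> cube m" and unbounded: "\<not> bounded_set M"
  shows "\<exists>i<m. \<not> bdd_above ((\<lambda>x. x ! i) ` M) \<or> \<not> bdd_below ((\<lambda>x. x ! i) ` M)"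
proof (rule ccontr)
  assume "\<not> ?thesis"
  then have "\<forall>i<m. \<exists>hi. \<forall>x\<in>M. x ! i \<le> hi" "\<forall>i<m. \<exists>lo. \<forall>x\<in>M. lo \<le> x ! i"
    by (auto simp: bdd_above_def bdd_below_def)
  then obtain hi lo where hi: "\<And>i x. i < m \<Longrightarrow> x \<in> M \<Longrightarrow> x ! i \<le> hi i"
    and lo: "\<And>i x. i < m \<Longrightarrow> x \<in> M \<Longrightarrow> lo i \<le> x ! i"
    by metis
  \<comment> \<open>indices range over {..m} only so that Min and Max are taken over nonempty sets\<close>
  have "Min (lo ` {..m}) \<le> t \<and> t \<le> Max (hi ` {..m})" if xs: "xs \<in> M" and t: "t \<in> set xs" for xs t
  proof -
    obtain i where "i < m" "t = xs ! i"
      using xs t M by (auto simp: cube_def in_set_conv_nth)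
    with xs hi lo show ?thesis
      by (meson Max_ge Min_le atMost_iff finite_atMost finite_imageI image_eqI less_imp_le
          order_trans)
  qed
  with unbounded show False
    unfolding bounded_set_def by blast
qed

lemma ex_pos_if_not_bounded_set:
  assumes "\<not> bounded_set (M :: 'a::linordered_ab_group_add list set)"
  shows "\<exists>d::'a. 0 < d"
proof (rule ccontr)
  assume "\<nexists>d::'a. 0 < d"
  then have "t = 0" for t :: 'a
    by (metis neg_0_less_iff_less not_less_iff_gr_or_eq)
  then have "bounded_set M"
    unfolding bounded_set_def by (metis order_refl)
  with assms show False ..
qed

locale o_minimal_group =
  fixes S :: "nat \<Rightarrow> ('a::linordered_ab_group_add) list set set"
  assumes o_minimal_expansion: "o_minimal_expansion S"
    and nontrivial: "\<exists>d::'a. 0 < d"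
begin

sublocale first_order_structure S
  by unfold_locales (use o_minimal_expansion in \<open>simp add: o_minimal_expansion_def\<close>)

lemma wf_fm_FLess [simp]: "wf_fm S n (FLess i j) \<longleftrightarrow> i < n \<and> j < n"
  using o_minimal_expansion by (simp add: FLess_def o_minimal_expansion_def numeral_2_eq_2)

lemma wf_fm_FPlus [simp]: "wf_fm S n (FPlus i j k) \<longleftrightarrow> i < n \<and> j < n \<and> k < n"
  using o_minimal_expansion by (simp add: FPlus_def o_minimal_expansion_def numeral_3_eq_3)

lemma wf_fm_FConst [simp]: "wf_fm S n (FConst a i) \<longleftrightarrow> i < n"
  by (simp add: FConst_def singleton_in[unfolded One_nat_def])

lemma finite_boundary:
  assumes "A \<in> S 1"
  shows "\<exists>E. finite E \<and> boundary_within E {x. [x] \<in> A}"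
proof -
  obtain P F where "finite P" "finite F" "\<forall>I\<in>F. is_open_interval I" and A: "{x. [x] \<in> A} = P \<union> \<Union>F"
    using o_minimal_expansion assms unfolding o_minimal_expansion_def by metis
  then obtain E where "finite E" "boundary_within E (\<Union>F)"
    using boundary_within_Union boundary_within_open_interval by metis
  with \<open>finite P\<close> show ?thesis
    unfolding A by (intro exI[of _ "P \<union> E"]) (simp add: boundary_within_Un boundary_within_self)
qed

lemma eventually_in_or_out: "A \<in> S 1 \<Longrightarrow> \<exists>e. (\<forall>x>e. [x] \<in> A) \<or> (\<forall>x>e. [x] \<notin> A)"
  using finite_boundary boundary_within_eventually by fastforce

lemma eventually_in_if_unbounded:
  assumes "A \<in> S 1" "\<And>c. \<exists>x>c. [x] \<in> A"
  shows "\<exists>e. \<forall>x>e. [x] \<in> A"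
  using eventually_in_or_out[OF assms(1)] assms(2) by blast

lemma
  fixes x :: 'a
  shows gt_ex: "\<exists>y. x < y" and lt_ex: "\<exists>y. y < x"
proof -
  obtain d :: 'a where "0 < d"
    using nontrivial ..
  then have "x < x + d" "x - d < x"
    by simp_all
  then show "\<exists>y. x < y" "\<exists>y. y < x"
    by blast+
qed

(* A gap (x, y) would make y - x the least positive element; but the definable set of doubles
   z + z contains a tail, so y - x = w + w with 0 < w < y - x. *)
lemma exists_between:
  fixes x y :: 'a
  assumes "x < y"
  shows "\<exists>z. x < z \<and> z < y"
proof (rule ccontr)
  assume gap: "\<nexists>z. x < z \<and> z < y"
  define \<delta> where "\<delta> = y - x"
  have "0 < \<delta>"
    using assms by (simp add: \<delta>_def)
  have least: "\<delta> \<le> w" if "0 < w" for w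
  proof (rule ccontr)
    assume "\<not> \<delta> \<le> w"
    then have "x < x + w" "x + w < y"
      using that by (simp_all add: \<delta>_def not_le less_diff_eq add.commute)
    with gap show False
      by blast
  qed
  let ?Even = "{xs :: 'a list. length xs = 1 \<and> sat (FEx (FPlus 1 1 0)) xs}"
  have "?Even \<in> S 1"
    by (rule fm_set_in) simp
  then obtain e where e: "(\<forall>u>e. [u] \<in> ?Even) \<or> (\<forall>u>e. [u] \<notin> ?Even)"
    using eventually_in_or_out by blast
  obtain m where m: "max e 0 < m"
    using gt_ex by blast
  then have "e < m + m"
    by (meson less_add_same_cancel1 less_trans max.strict_boundedE)
  moreover have "[m + m] \<in> ?Even"
    by auto
  ultimately have "\<forall>u>e. [u] \<in> ?Even"
    using e by blast
  moreover have "e < m + m + \<delta>"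
    using \<open>e < m + m\<close> \<open>0 < \<delta>\<close> by (meson less_add_same_cancel1 less_trans)
  ultimately obtain z where z: "z + z = m + m + \<delta>"
    by auto
  define w where "w = z - m"
  have w: "w + w = \<delta>"
    using z by (simp add: w_def algebra_simps)
  with \<open>0 < \<delta>\<close> have "0 < w"
    by (metis add_nonpos_nonpos not_le)
  with least have "\<delta> + \<delta> \<le> w + w"
    by (simp add: add_mono)
  with w \<open>0 < \<delta>\<close> show False
    by simp
qed

lemma has_sup:
  assumes "A \<in> S 1" "[x0] \<in> A" "\<And>x. [x] \<in> A \<Longrightarrow> x \<le> B"
  shows "\<exists>s. is_sup {x. [x] \<in> A} s"
  using finite_boundary[OF assms(1)] assms(2,3)
  by (metis (mono_tags) boundary_within_has_sup exists_between gt_ex mem_Collect_eq)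

lemma is_sup_nonempty:
  fixes X :: "'a set"
  shows "is_sup X s \<Longrightarrow> X \<noteq> {}"
  using lt_ex[of s] unfolding is_sup_def by blast

lemma sup_graph_in:
  assumes "R \<in> S 2"
  shows "{[t, a] | t a. is_sup {s. [t, s] \<in> R} a} \<in> S 2"
proof -
  let ?p = "FConj (FAll (FImp (FAtom R [0, 2]) (FNeg (FLess 1 2))))
                  (FAll (FImp (FLess 2 1) (FEx (FConj (FAtom R [0, 3]) (FLess 2 3)))))"
  have "{[t, a] | t a. is_sup {s. [t, s] \<in> R} a} = {xs. length xs = 2 \<and> sat ?p xs}"
    by (auto simp: is_sup_def not_less numeral_2_eq_2 length_Suc_conv)
  also have "\<dots> \<in> S 2"
    using assms by (intro fm_set_in) (simp add: numeral_2_eq_2)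
  finally show ?thesis .
qed

lemma converse_sup_graph_in:
  assumes "R \<in> S 2"
  shows "{[u, s] | u s. is_sup {t. [t, s] \<in> R} u} \<in> S 2"
proof -
  have "{[u, s] | u s. is_sup {t. [t, s] \<in> R} u}
      = {[y, x] | x y. [x, y] \<in> {[t, a] | t a. is_sup {s. [t, s] \<in> {[y, x] | x y. [x, y] \<in> R}} a}}"
    by auto
  also have "\<dots> \<in> S 2"
    by (intro converse_in sup_graph_in assms)
  finally show ?thesis .
qed

lemma shifted_graph_in:
  assumes "G \<in> S 2"
  shows "{[x, s] | x s. 0 < x \<and> [x + e, s] \<in> G} \<in> S 2"
proof -
  let ?p = "FConj (FEx (FConj (FConst 0 2) (FLess 2 0)))
                  (FEx (FConj (FEx (FConj (FConst e 3) (FPlus 0 3 2))) (FAtom G [2, 1])))"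
  have "{[x, s] | x s. 0 < x \<and> [x + e, s] \<in> G} = {xs. length xs = 2 \<and> sat ?p xs}"
    by (auto simp: numeral_2_eq_2 length_Suc_conv)
  also have "\<dots> \<in> S 2"
    using assms by (intro fm_set_in) (simp add: numeral_2_eq_2)
  finally show ?thesis .
qed

lemma negation_graph_in: "{[- v, v] | v. True} \<in> S 2"
proof -
  let ?p = "FEx (FConj (FConst 0 2) (FPlus 0 1 2))"
  have "{[- v, v] | v :: 'a. True} = {xs. length xs = 2 \<and> sat ?p xs}"
    by (auto simp: numeral_2_eq_2 length_Suc_conv add_eq_0_iff2)
  also have "\<dots> \<in> S 2"
    by (intro fm_set_in) (simp add: numeral_2_eq_2)
  finally show ?thesis .
qed

end

(* R \<subseteq> G^(1+n), read as the multivalued map t \<mapsto> {y. t # y \<in> R}: defined on a tail of G, with values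
   in a bounded set, and injective in the sense that distinct arguments have disjoint value sets. *)
definition tail_multi_injection ::
    "(nat \<Rightarrow> 'a list set set) \<Rightarrow> nat \<Rightarrow> ('a::linorder) list set \<Rightarrow> bool" where
  "tail_multi_injection S n R \<longleftrightarrow>
     R \<in> S (Suc n) \<and> (\<exists>e. \<forall>t>e. \<exists>y. t # y \<in> R) \<and>
     (\<forall>t t' y. t # y \<in> R \<longrightarrow> t' # y \<in> R \<longrightarrow> t = t') \<and> bounded_set {y. \<exists>t. t # y \<in> R}"

context o_minimal_group
begin

lemma tail_multi_injectionI:
  assumes "R \<in> S (Suc n)" "\<And>c. \<exists>t y. c < t \<and> t # y \<in> R"
    and "\<And>t t' y. t # y \<in> R \<Longrightarrow> t' # y \<in> R \<Longrightarrow> t = t'"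
    and "bounded_set {y. \<exists>t. t # y \<in> R}"
  shows "tail_multi_injection S n R"
proof -
  have "\<exists>e. \<forall>t>e. [t] \<in> {[t] | t. \<exists>y. t # y \<in> R}"
    using domain_in[OF assms(1)] by (rule eventually_in_if_unbounded) (use assms(2) in force)
  with assms show ?thesis
    unfolding tail_multi_injection_def by auto
qed

lemma no_tail_multi_injection_0: "\<not> tail_multi_injection S 0 R"
proof
  assume "tail_multi_injection S 0 R"
  then obtain e where R: "R \<in> S 1" and tail: "\<forall>t>e. \<exists>y. t # y \<in> R"
    and inj: "\<forall>t t' y. t # y \<in> R \<longrightarrow> t' # y \<in> R \<longrightarrow> t = t'"
    unfolding tail_multi_injection_def by auto
  obtain t1 t2 where "e < t1" "t1 < t2"
    using gt_ex by (meson less_trans)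
  moreover have "[t] \<in> R" if "e < t" for t
    using tail that length_mem[OF R] by fastforce
  ultimately show False
    using inj by (metis less_irrefl less_trans)
qed

lemma tail_multi_injection_fix_last:
  assumes R: "tail_multi_injection S (Suc n) R" and s: "\<forall>t>e. \<exists>y. t # y @ [s] \<in> R"
  shows "tail_multi_injection S n {xs. xs @ [s] \<in> R}"
proof -
  have "R \<in> S (Suc (Suc n))" and "\<forall>t t' y. t # y \<in> R \<longrightarrow> t' # y \<in> R \<longrightarrow> t = t'"
    and "bounded_set {y. \<exists>t. t # y \<in> R}"
    using R unfolding tail_multi_injection_def by auto
  moreover have "bounded_set {y. \<exists>t. t # y @ [s] \<in> R}"
    using \<open>bounded_set {y. \<exists>t. t # y \<in> R}\<close> unfolding bounded_set_def by fastforce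
  ultimately show ?thesis
    using s unfolding tail_multi_injection_def by (auto simp: snoc_fiber_in)
qed

lemma tail_multi_injection_sup_last:
  assumes R: "tail_multi_injection S (Suc n) R" and no_fix: "\<forall>s e. \<exists>t>e. \<nexists>y. t # y @ [s] \<in> R"
  shows "tail_multi_injection S 1 {[u, s] | u s. is_sup {t. \<exists>y. t # y @ [s] \<in> R} u}"
    (is "tail_multi_injection S 1 ?\<Sigma>")
proof -
  obtain e b b' where R_in: "R \<in> S (Suc (Suc n))" and tail: "\<forall>t>e. \<exists>y. t # y \<in> R"
    and bd: "\<forall>y\<in>{y. \<exists>t. t # y \<in> R}. \<forall>u\<in>set y. b \<le> u \<and> u \<le> b'"
    using R unfolding tail_multi_injection_def bounded_set_def by blast
  let ?P = "{[t, s] | t s. \<exists>y. t # y @ [s] \<in> R}"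
  let ?F = "\<lambda>s. {t. \<exists>y. t # y @ [s] \<in> R}"
  have P_in: "?P \<in> S 2"
    using first_last_projection_in[OF R_in] .
  have F_in: "{xs. xs @ [s] \<in> ?P} \<in> S 1" and F_eq: "{x. [x] \<in> {xs. xs @ [s] \<in> ?P}} = ?F s" for s
    using snoc_fiber_in[of ?P 1 s] P_in by (auto simp: numeral_2_eq_2)
  have F_bdd: "\<exists>B. \<forall>t\<in>?F s. t \<le> B" for s
  proof -
    obtain e' where "(\<forall>t>e'. [t] \<in> {xs. xs @ [s] \<in> ?P}) \<or> (\<forall>t>e'. [t] \<notin> {xs. xs @ [s] \<in> ?P})"
      using eventually_in_or_out[OF F_in] by blast
    then have "\<forall>t>e'. t \<notin> ?F s"
      using no_fix F_eq by blast
    then show ?thesis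
      by (meson not_le)
  qed
  have "?\<Sigma> \<in> S 2"
    using converse_sup_graph_in[OF P_in] by simp
  then show ?thesis
  proof (intro tail_multi_injectionI)
    fix c
    obtain t where t: "max c e < t"
      using gt_ex by blast
    then obtain y where "t # y \<in> R"
      using tail by auto
    moreover have "y \<noteq> []"
      using length_mem[OF R_in \<open>t # y \<in> R\<close>] by auto
    ultimately have "t # butlast y @ [last y] \<in> R"
      by simp
    then have "t \<in> ?F (last y)"
      by blast
    moreover obtain B where "\<forall>t\<in>?F (last y). t \<le> B"
      using F_bdd by blast
    ultimately obtain u where u: "is_sup (?F (last y)) u"
      using has_sup[OF F_in[of "last y"], of t B] F_eq by auto
    with \<open>t \<in> ?F (last y)\<close> have "t \<le> u"
      unfolding is_sup_def by blast
    with t u show "\<exists>u y. c < u \<and> u # y \<in> ?\<Sigma>"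
      by (intro exI[of _ u] exI[of _ "[last y]"]) auto
  next
    show "u = u'" if "u # y \<in> ?\<Sigma>" "u' # y \<in> ?\<Sigma>" for u u' y
      using that is_sup_unique by auto
  next
    have "b \<le> s \<and> s \<le> b'" if "is_sup (?F s) u" for s u
      using is_sup_nonempty[OF that] bd by fastforce
    then show "bounded_set {y. \<exists>u. u # y \<in> ?\<Sigma>}"
      unfolding bounded_set_def by (intro exI[of _ b] exI[of _ b']) auto
  qed (simp add: numeral_2_eq_2)
qed

lemma tail_multi_injection_reduce: "tail_multi_injection S n R \<Longrightarrow> \<exists>R'. tail_multi_injection S 1 R'"
proof (induction n arbitrary: R)
  case 0
  then show ?case
    using no_tail_multi_injection_0 by blast
next
  case (Suc n)
  show ?case
  proof (cases "\<exists>s e. \<forall>t>e. \<exists>y. t # y @ [s] \<in> R")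
    case True
    then show ?thesis
      using Suc tail_multi_injection_fix_last by blast
  next
    case False
    then show ?thesis
      using Suc.prems tail_multi_injection_sup_last by blast
  qed
qed

lemma eq_if_fibers_same_sup:
  assumes R: "R \<in> S 2" and inj: "\<And>t t' s. [t, s] \<in> R \<Longrightarrow> [t', s] \<in> R \<Longrightarrow> t = t'"
    and sup: "is_sup {s. [t, s] \<in> R} a" "is_sup {s. [t', s] \<in> R} a"
    and attained: "[t, a] \<in> R \<longleftrightarrow> [t', a] \<in> R"
  shows "t = t'"
proof (cases "[t, a] \<in> R")
  case True
  with attained inj show ?thesis
    by blast
next
  case False
  have "{y. t' # y \<in> R} \<in> S 1" and "{x. [x] \<in> {y. t' # y \<in> R}} = {s. [t', s] \<in> R}"
    using Cons_fiber_in[of R 1 t'] R by (simp_all add: numeral_2_eq_2)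
  then obtain E where "finite E" "boundary_within E {s. [t', s] \<in> R}"
    using finite_boundary by metis
  moreover obtain s0 where "s0 \<in> {s. [t, s] \<in> R}"
    using is_sup_nonempty[OF sup(1)] by blast
  ultimately have "{s. [t', s] \<in> R} \<inter> {s. [t, s] \<in> R} \<noteq> {}"
    using False attained sup by (intro boundary_within_common_sup) auto
  with inj show ?thesis
    by blast
qed

lemma tail_multi_injection_plane:
  assumes "tail_multi_injection S 1 R"
  shows "\<exists>\<phi>. {[x, \<phi> x] | x. 0 < x} \<in> S 2 \<and> inj_on \<phi> {x. 0 < x} \<and> bounded_set {[\<phi> x] | x. 0 < x}"
proof -
  obtain e b b' where R: "R \<in> S 2" and tail: "\<forall>t>e. \<exists>y. t # y \<in> R"
    and inj: "\<And>t t' s. [t, s] \<in> R \<Longrightarrow> [t', s] \<in> R \<Longrightarrow> t = t'"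
    and bd: "\<forall>y\<in>{y. \<exists>t. t # y \<in> R}. \<forall>u\<in>set y. b \<le> u \<and> u \<le> b'"
    using assms unfolding tail_multi_injection_def bounded_set_def by (auto simp: numeral_2_eq_2)
  let ?F = "\<lambda>t. {s. [t, s] \<in> R}"
  let ?\<Gamma> = "{[t, a] | t a. is_sup (?F t) a}"
  have sup_ex: "\<exists>a. is_sup (?F t) a" if t: "e < t" for t
  proof -
    obtain y where "t # y \<in> R"
      using tail t by blast
    moreover from this obtain s where "y = [s]"
      using length_mem[OF R] by (fastforce simp: numeral_2_eq_2 length_Suc_conv)
    ultimately show ?thesis
      using has_sup[of "{y. t # y \<in> R}" s b'] Cons_fiber_in[of R 1 t] R bd
      by (fastforce simp: numeral_2_eq_2)
  qed
  let ?A = "{[t] | t. \<exists>y. t # y \<in> ?\<Gamma> \<inter> R}"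
  have "?A \<in> S 1"
    using R sup_graph_in[OF R] by (intro domain_in[of _ 1] Int_in) (simp_all add: numeral_2_eq_2)
  then obtain e1 where "(\<forall>t>e1. [t] \<in> ?A) \<or> (\<forall>t>e1. [t] \<notin> ?A)"
    using eventually_in_or_out by blast
  moreover have attained: "[t] \<in> ?A \<longleftrightarrow> (\<exists>a. is_sup (?F t) a \<and> [t, a] \<in> R)" for t
    by auto
  ultimately have e1: "(\<forall>t>e1. \<exists>a. is_sup (?F t) a \<and> [t, a] \<in> R)
      \<or> (\<forall>t>e1. \<nexists>a. is_sup (?F t) a \<and> [t, a] \<in> R)"
    by (simp only: attained)
  define e2 where "e2 = max e e1"
  have shift: "e < x + e2" "e1 < x + e2" if "0 < x" for x
  proof -
    have "e \<le> e2" "e1 \<le> e2"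
      by (simp_all add: e2_def)
    moreover have "e2 < x + e2"
      using that by simp
    ultimately show "e < x + e2" "e1 < x + e2"
      by (meson le_less_trans)+
  qed
  define \<phi> where "\<phi> x = (THE a. is_sup (?F (x + e2)) a)" for x
  have \<phi>: "is_sup (?F (x + e2)) (\<phi> x)" if x: "0 < x" for x
  proof -
    obtain a where a: "is_sup (?F (x + e2)) a"
      using sup_ex shift x by blast
    then show ?thesis
      unfolding \<phi>_def by (rule theI) (use a is_sup_unique in blast)
  qed
  have "{[x, \<phi> x] | x. 0 < x} = {[x, a] | x a. 0 < x \<and> [x + e2, a] \<in> ?\<Gamma>}"
    using \<phi> is_sup_unique by fastforce
  also have "\<dots> \<in> S 2"
    by (intro shifted_graph_in sup_graph_in R)
  finally have "{[x, \<phi> x] | x. 0 < x} \<in> S 2" .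
  moreover have "inj_on \<phi> {x. 0 < x}"
  proof (rule inj_onI)
    fix x x' assume x: "x \<in> {x. 0 < x}" and x': "x' \<in> {x. 0 < x}" and eq: "\<phi> x = \<phi> x'"
    have sup: "is_sup (?F (x + e2)) (\<phi> x)" "is_sup (?F (x' + e2)) (\<phi> x)"
      and "e1 < x + e2" "e1 < x' + e2"
      using \<phi>[of x] \<phi>[of x'] shift[of x] shift[of x'] x x' unfolding eq by auto
    with e1 have "[x + e2, \<phi> x] \<in> R \<longleftrightarrow> [x' + e2, \<phi> x] \<in> R"
      by (metis is_sup_unique)
    with sup have "x + e2 = x' + e2"
      by (intro eq_if_fibers_same_sup[OF R inj])
    then show "x = x'"
      by simp
  qed
  moreover have "bounded_set {[\<phi> x] | x. 0 < x}"
  proof -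
    have "b \<le> \<phi> x \<and> \<phi> x \<le> b'" if x: "0 < x" for x
    proof -
      obtain s where "[x + e2, s] \<in> R"
        using is_sup_nonempty[OF \<phi>[OF x]] by blast
      with \<phi>[OF x] bd show ?thesis
        by (intro is_sup_between[of "?F (x + e2)" _ s]) auto
    qed
    then show ?thesis
      unfolding bounded_set_def by (intro exI[of _ b] exI[of _ b']) auto
  qed
  ultimately show ?thesis
    by blast
qed

lemma tail_multi_injection_coordinate:
  assumes h: "definable_map S m n M h" "inj_on h M" "bounded_set (h ` M)"
    and \<sigma>: "{[\<sigma> v, v] | v. True} \<in> S 2" and i: "i < m"
    and unbounded: "\<not> bdd_above ((\<lambda>x. \<sigma> (x ! i)) ` M)"
  shows "tail_multi_injection S n {\<sigma> (x ! i) # h x | x. x \<in> M}"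
proof (rule tail_multi_injectionI)
  have M: "M \<subseteq> cube m" and hM: "h ` M \<subseteq> cube n" and graph: "{xs @ h xs | xs. xs \<in> M} \<in> S (m + n)"
    using h(1) unfolding definable_map_def by auto
  let ?A = "{u # zs | u zs. zs \<in> {xs @ h xs | xs. xs \<in> M}}
      \<inter> {zs \<in> cube (Suc (m + n)). map ((!) zs) [0, Suc i] \<in> {[\<sigma> v, v] | v. True}}"
  let ?ix = "0 # [Suc m..<Suc (m + n)]"
  have "?A \<in> S (Suc (m + n))"
    using i \<sigma> by (intro Int_in Cons_in graph preimage_in) (auto simp: numeral_2_eq_2)
  then have "(\<lambda>zs. map ((!) zs) ?ix) ` ?A \<in> S (length ?ix)"
    by (rule image_in) auto
  moreover have "(\<lambda>zs. map ((!) zs) ?ix) ` ?A = {\<sigma> (x ! i) # h x | x. x \<in> M}"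
  proof -
    have len: "length x = m" "length (h x) = n" if "x \<in> M" for x
      using that M hM by (auto simp: cube_def)
    have ix: "map ((!) (u # x @ h x)) [Suc m..<Suc (m + n)] = h x" if "x \<in> M" for u x
      using len[OF that]
      by (intro nth_equalityI) (auto simp: nth_append nth_Cons' simp del: upt_Suc)
    have nth_i: "(x @ h x) ! i = x ! i" if "x \<in> M" for x
      using len[OF that] i by (simp add: nth_append)
    show ?thesis
    proof (intro equalityI subsetI)
      fix ys assume "ys \<in> (\<lambda>zs. map ((!) zs) ?ix) ` ?A"
      then obtain u x where x: "x \<in> M" and ys: "ys = map ((!) (u # x @ h x)) ?ix"
        and "[u, (u # x @ h x) ! Suc i] \<in> {[\<sigma> v, v] | v. True}"
        by auto
      then have "u = \<sigma> (x ! i)"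
        using nth_i by auto
      with x ys ix show "ys \<in> {\<sigma> (x ! i) # h x | x. x \<in> M}"
        by auto
    next
      fix ys assume "ys \<in> {\<sigma> (x ! i) # h x | x. x \<in> M}"
      then obtain x where "x \<in> M" "ys = \<sigma> (x ! i) # h x"
        by auto
      then show "ys \<in> (\<lambda>zs. map ((!) zs) ?ix) ` ?A"
        by (intro image_eqI[of _ _ "\<sigma> (x ! i) # x @ h x"])
          (auto simp: cube_def len ix nth_i simp del: upt_Suc)
    qed
  qed
  ultimately show "{\<sigma> (x ! i) # h x | x. x \<in> M} \<in> S (Suc n)"
    by (simp del: upt_Suc)
next
  show "\<exists>t y. c < t \<and> t # y \<in> {\<sigma> (x ! i) # h x | x. x \<in> M}" for c
    using unbounded unfolding bdd_above_def by (fastforce simp: not_le)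
next
  show "t = t'" if "t # y \<in> {\<sigma> (x ! i) # h x | x. x \<in> M}" "t' # y \<in> {\<sigma> (x ! i) # h x | x. x \<in> M}"
    for t t' y
    using that h(2) by (auto dest: inj_onD)
next
  have "{y. \<exists>t. t # y \<in> {\<sigma> (x ! i) # h x | x. x \<in> M}} = h ` M"
    by auto
  with h(3) show "bounded_set {y. \<exists>t. t # y \<in> {\<sigma> (x ! i) # h x | x. x \<in> M}}"
    by simp
qed

lemma tail_multi_injection_of_unbounded:
  assumes h: "definable_map S m n M h" "inj_on h M" "bounded_set (h ` M)"
    and unbounded: "\<not> bounded_set M"
  shows "\<exists>R. tail_multi_injection S n R"
proof -
  have M: "M \<subseteq> cube m"
    using h(1) unfolding definable_map_def by blast
  obtain i where i: "i < m"
    and "\<not> bdd_above ((\<lambda>x. x ! i) ` M) \<or> \<not> bdd_below ((\<lambda>x. x ! i) ` M)"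
    using unbounded_coordinate[OF M unbounded] by auto
  then obtain \<sigma> :: "'a \<Rightarrow> 'a"
    where \<sigma>: "{[\<sigma> v, v] | v. True} \<in> S 2" "\<not> bdd_above ((\<lambda>x. \<sigma> (x ! i)) ` M)"
  proof (elim disjE)
    assume "\<not> bdd_above ((\<lambda>x. x ! i) ` M)"
    with diagonal_graph_in show ?thesis
      by (intro that[of "\<lambda>v. v"]) auto
  next
    assume "\<not> bdd_below ((\<lambda>x. x ! i) ` M)"
    with negation_graph_in show ?thesis
      using bdd_above_uminus[of "(\<lambda>x. x ! i) ` M"]
      by (intro that[of uminus]) (auto simp: image_image)
  qed
  show ?thesis
    using tail_multi_injection_coordinate[OF h \<sigma>(1) i \<sigma>(2)] by blast
qed

end

theorem proposition3p5:
  fixes S :: "nat \<Rightarrow> ('a::linordered_ab_group_add) list set set"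
    and M N :: "'a list set" and m n :: nat and h :: "'a list \<Rightarrow> 'a list"
  assumes "o_minimal_expansion S"
    and "definable S m M" and "\<not> bounded_set M"
    and "definable S n N" and "bounded_set N"
    and "definable_map S m n M h" and "bij_betw h M N"
  shows "\<exists>D f. definable S 1 D \<and> bounded_set D \<and>
           definable_map S 1 1 {[t] | t. 0 < t} f \<and> bij_betw f {[t] | t. 0 < t} D"
proof -
  interpret o_minimal_group S
    using assms(1) ex_pos_if_not_bounded_set[OF assms(3)] by unfold_locales
  have "bounded_set (h ` M)" "inj_on h M"
    using assms(5,7) by (simp_all add: bij_betw_def)
  then obtain R where "tail_multi_injection S n R"
    using tail_multi_injection_of_unbounded assms(3,6) by blast
  then obtain R' where "tail_multi_injection S 1 R'"
    using tail_multi_injection_reduce by blast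
  then obtain \<phi> where \<phi>: "{[x, \<phi> x] | x. 0 < x} \<in> S 2" "inj_on \<phi> {x. 0 < x}"
    "bounded_set {[\<phi> x] | x. 0 < x}"
    using tail_multi_injection_plane by blast
  then show ?thesis
    using definable_bij_of_graph[OF \<phi>(1,2)] unfolding definable_def by blast
qed

end
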